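(* Let $T$ be an admissible LCA-tree and $z$ a positive integer. Then for every non-root node $\eta$ of $T$, \[ 0\le \mathrm{CostDecrease}(\eta,z)\le \mathrm{CostDecrease}(\mathrm{parent}(\eta),z). \] Consequently, the tree $T'$ obtained from $T$ by replacing each node value $d(\eta)$ with $\mathrm{CostDecrease}(\eta,z)$ is again an admissible LCA-tree (with value $+\infty$ at the root), so its LCA-distances form a relaxed ultrametric on the leaves.
   Context: An LCA-tree is a finite rooted tree $T$ in which every node $\eta$ (leaves included) carries a value $d(\eta)$; for leaves $\ell_i,\ell_j$, $d(\ell_i,\ell_j)=d(\ell_i\lor\ell_j)$ (lowest common ancestor, with $\ell\lor\ell=\ell$). It is admissible if $d(\eta)\ge0$ for all nodes and $d(\eta)\le d(\mathrm{parent}(\eta))$ for every non-root node. A relaxed ultrametric is a symmetric $d:L\times L\to\mathbb{R}_{\ge0}$ (here allowing $+\infty$ as a value) satisfying $d(x,z)\le\max(d(x,y),d(y,z))$ for all $x,y,z$, with $d(x,x)$ possibly nonzero. $T[\eta]$ is the subtree rooted at $\eta$ and $|T[\eta]|$ its number of leaves. For a set $\mathbf{C}$ of leaves of a tree $S$, $\mathrm{Cost}_z(S,\mathbf{C})=\sum_{\ell\text{ leaf of }S}\min_{c\in\mathbf{C}} d(\ell,c)^z$. A corresponding $z$-center of $\eta$ is a leaf $c_z(\eta)$ of $T[\eta]$ minimizing $\mathrm{Cost}_z(T[\eta],\{c\})$ over leaves $c$ of $T[\eta]$. For a non-root node $\eta$, $\mathrm{CostDecrease}(\eta,z)=|T[\eta]|\cdot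 d(\mathrm{parent}(\eta))^z-\mathrm{Cost}_z(T[\eta],\{c_z(\eta)\})$ (this does not depend on which minimizer $c_z(\eta)$ is chosen); for the root, $\mathrm{CostDecrease}=+\infty$. *)

theory Defs
  imports "HOL-Library.Extended_Real"
begin

text \<open>Convention: the root is its own parent (par r = r); for non-root nodes par is the
  genuine parent.\<close>
definition rooted_tree :: "'n set \<Rightarrow> 'n \<Rightarrow> ('n \<Rightarrow> 'n) \<Rightarrow> bool" where
  "rooted_tree N r par \<longleftrightarrow> finite N \<and> r \<in> N \<and> par r = r \<and>
     (\<forall>x\<in>N. par x \<in> N) \<and> (\<forall>x\<in>N. \<exists>k. (par ^^ k) x = r)"

definition anc :: "('n \<Rightarrow> 'n) \<Rightarrow> 'n \<Rightarrow> 'n \<Rightarrow> bool" where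
  "anc par x y \<longleftrightarrow> (\<exists>k. (par ^^ k) y = x)"

definition leaves :: "'n set \<Rightarrow> 'n \<Rightarrow> ('n \<Rightarrow> 'n) \<Rightarrow> 'n set" where
  "leaves N r par = {x\<in>N. \<not> (\<exists>y\<in>N. y \<noteq> r \<and> par y = x)}"

definition sub_leaves :: "'n set \<Rightarrow> 'n \<Rightarrow> ('n \<Rightarrow> 'n) \<Rightarrow> 'n \<Rightarrow> 'n set" where
  "sub_leaves N r par eta = {l \<in> leaves N r par. anc par eta l}"

definition lca :: "'n set \<Rightarrow> ('n \<Rightarrow> 'n) \<Rightarrow> 'n \<Rightarrow> 'n \<Rightarrow> 'n" where
  "lca N par x y = (THE e. e \<in> N \<and> anc par e x \<and> anc par e y \<and>
       (\<forall>e'\<in>N. anc par e' x \<and> anc par e' y \<longrightarrow> anc par e' e))"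

definition admissible :: "'n set \<Rightarrow> 'n \<Rightarrow> ('n \<Rightarrow> 'n) \<Rightarrow> ('n \<Rightarrow> 'a::{linorder,zero}) \<Rightarrow> bool" where
  "admissible N r par d \<longleftrightarrow> (\<forall>e\<in>N. 0 \<le> d e) \<and> (\<forall>e\<in>N - {r}. d e \<le> d (par e))"

text \<open>Cost_z(T[eta], {c}) with distances d(l,c) = d(lca l c).\<close>
definition cost1 :: "'n set \<Rightarrow> 'n \<Rightarrow> ('n \<Rightarrow> 'n) \<Rightarrow> ('n \<Rightarrow> real) \<Rightarrow> nat \<Rightarrow> 'n \<Rightarrow> 'n \<Rightarrow> real" where
  "cost1 N r par d z eta c = (\<Sum>l\<in>sub_leaves N r par eta. d (lca N par l c) ^ z)"

definition center_cost :: "'n set \<Rightarrow> 'n \<Rightarrow> ('n \<Rightarrow> 'n) \<Rightarrow> ('n \<Rightarrow> real) \<Rightarrow> nat \<Rightarrow> 'n \<Rightarrow> real" where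
  "center_cost N r par d z eta = Min (cost1 N r par d z eta ` sub_leaves N r par eta)"

definition cost_decrease :: "'n set \<Rightarrow> 'n \<Rightarrow> ('n \<Rightarrow> 'n) \<Rightarrow> ('n \<Rightarrow> real) \<Rightarrow> 'n \<Rightarrow> nat \<Rightarrow> ereal" where
  "cost_decrease N r par d eta z =
     (if eta = r then \<infinity>
      else ereal (real (card (sub_leaves N r par eta)) * d (par eta) ^ z
                  - center_cost N r par d z eta))"

definition relaxed_ultrametric :: "'a set \<Rightarrow> ('a \<Rightarrow> 'a \<Rightarrow> ereal) \<Rightarrow> bool" where
  "relaxed_ultrametric L D \<longleftrightarrow>
     (\<forall>x\<in>L. \<forall>y\<in>L. 0 \<le> D x y \<and> D x y = D y x) \<and>
     (\<forall>x\<in>L. \<forall>y\<in>L. \<forall>w\<in>L. D x w \<le> max (D x y) (D y w))"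

end

theory Submission
  imports Defs
begin

text \<open>Fix a leaf c of T[eta] realising the center cost of eta. Leaves of T[par eta] outside T[eta]
  meet c exactly at par eta, so using c as a (possibly suboptimal) center of T[par eta] shows
  Cost(T[par eta]) \<le> Cost(T[eta], c) + (|T[par eta]| - |T[eta]|) d(par eta)^z. Together with
  d(par eta) \<le> d(par (par eta)) this gives monotonicity of CostDecrease; nonnegativity holds
  since every leaf of T[eta] is at distance at most d(eta) \<le> d(par eta) from any center.
  An admissible node labelling always yields a relaxed ultrametric through LCAs, because the
  LCAs of x, y and of y, w are comparable, and the smaller one is an ancestor of the LCA of x, w.\<close>

locale finite_rooted_tree =
  fixes N :: "'n set" and r :: 'n and par :: "'n \<Rightarrow> 'n"
  assumes rooted_tree: "rooted_tree N r par"
begin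

lemma finite_nodes: "finite N"
  and root_in_nodes: "r \<in> N"
  and par_root: "par r = r"
  and par_in_nodes: "x \<in> N \<Longrightarrow> par x \<in> N"
  and reaches_root: "x \<in> N \<Longrightarrow> \<exists>k. (par ^^ k) x = r"
  using rooted_tree unfolding rooted_tree_def by auto

lemma funpow_par_in_nodes: "x \<in> N \<Longrightarrow> (par ^^ k) x \<in> N"
  by (induction k) (auto simp: par_in_nodes)

lemma funpow_par_root: "(par ^^ k) r = r"
  by (induction k) (auto simp: par_root)

lemma periodic_node_is_root:
  assumes "x \<in> N" "(par ^^ n) x = x" "n > 0"
  shows "x = r"
proof -
  obtain k where k: "(par ^^ k) x = r" using reaches_root assms(1) by blast
  have "((par ^^ n) ^^ k) x = x" using assms(2) by (induction k) auto
  then have "(par ^^ (k * n)) x = x" by (simp add: funpow_mult mult.commute)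
  moreover have "k * n = (k * n - k) + k" using assms(3) by simp
  ultimately have "x = (par ^^ (k * n - k)) ((par ^^ k) x)"
    by (metis funpow_add o_apply)
  then show ?thesis using k funpow_par_root by simp
qed

lemma par_neq_self: "e \<in> N \<Longrightarrow> e \<noteq> r \<Longrightarrow> par e \<noteq> e"
  using periodic_node_is_root[of e 1] by auto

subsection \<open>The ancestor relation\<close>

lemma anc_refl: "anc par x x"
  unfolding anc_def by (rule exI[of _ 0]) simp

lemma anc_trans: "anc par a b \<Longrightarrow> anc par b c \<Longrightarrow> anc par a c"
  unfolding anc_def by (metis funpow_add o_apply)

lemma par_anc: "anc par (par e) e"
  unfolding anc_def by (rule exI[of _ 1]) simp

lemma anc_in_nodes: "anc par a b \<Longrightarrow> b \<in> N \<Longrightarrow> a \<in> N"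
  unfolding anc_def using funpow_par_in_nodes by blast

lemma root_anc: "x \<in> N \<Longrightarrow> anc par r x"
  unfolding anc_def using reaches_root by blast

lemma anc_antisym:
  assumes "anc par a b" "anc par b a" "b \<in> N"
  shows "a = b"
proof -
  obtain i j where i: "(par ^^ i) b = a" and j: "(par ^^ j) a = b"
    using assms unfolding anc_def by blast
  have cycle: "(par ^^ (j + i)) b = b" using i j by (simp add: funpow_add)
  show ?thesis
  proof (cases "j + i = 0")
    case True then show ?thesis using i by simp
  next
    case False
    then have "b = r" using periodic_node_is_root assms(3) cycle by blast
    then show ?thesis using i funpow_par_root by simp
  qed
qed

lemma anc_linear:
  assumes "anc par a x" "anc par b x"
  shows "anc par a b \<or> anc par b a"
proof -
  obtain i j where i: "(par ^^ i) x = a" and j: "(par ^^ j) x = b"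
    using assms unfolding anc_def by blast
  have "(par ^^ (j - i)) a = b" if "i \<le> j"
    using i j that by (metis funpow_add le_add_diff_inverse2 o_apply)
  moreover have "(par ^^ (i - j)) b = a" if "j \<le> i"
    using i j that by (metis funpow_add le_add_diff_inverse2 o_apply)
  ultimately show ?thesis unfolding anc_def by (meson nat_le_linear)
qed

lemma anc_cases_par: "anc par a e \<Longrightarrow> a = e \<or> anc par a (par e)"
  unfolding anc_def by (metis funpow_0 funpow_Suc_right o_apply old.nat.exhaust)

text \<open>The number of ancestors serves as the depth of a node.\<close>

definition ancestors :: "'n \<Rightarrow> 'n set" where
  "ancestors x = {a \<in> N. anc par a x}"

lemma card_ancestors_strict_mono:
  assumes "anc par e e'" "e \<noteq> e'" "e' \<in> N"
  shows "card (ancestors e) < card (ancestors e')"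
proof (rule psubset_card_mono)
  show "finite (ancestors e')" using finite_nodes unfolding ancestors_def by simp
  have "ancestors e \<subseteq> ancestors e'" unfolding ancestors_def using assms(1) anc_trans by blast
  moreover have "e' \<in> ancestors e'" "e' \<notin> ancestors e" unfolding ancestors_def
    using assms anc_refl anc_antisym anc_in_nodes by blast+
  ultimately show "ancestors e \<subset> ancestors e'" by blast
qed

lemma obtain_deepest:
  assumes "finite S" "S \<noteq> {}"
  obtains x where "x \<in> S" "\<And>y. y \<in> S \<Longrightarrow> card (ancestors y) \<le> card (ancestors x)"
proof -
  let ?m = "Max ((\<lambda>x. card (ancestors x)) ` S)"
  have "?m \<in> (\<lambda>x. card (ancestors x)) ` S" using assms by simp
  then obtain x where "x \<in> S" "card (ancestors x) = ?m" by auto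
  then show ?thesis using that assms by auto
qed

lemma finite_sub_leaves: "finite (sub_leaves N r par eta)"
  using finite_nodes unfolding sub_leaves_def leaves_def by (rule finite_subset[rotated]) auto

lemma sub_leaves_in_nodes: "l \<in> sub_leaves N r par eta \<Longrightarrow> l \<in> N"
  unfolding sub_leaves_def leaves_def by auto

lemma anc_sub_leaves: "l \<in> sub_leaves N r par eta \<Longrightarrow> anc par eta l"
  unfolding sub_leaves_def by auto

lemma sub_leaves_par_subset: "sub_leaves N r par eta \<subseteq> sub_leaves N r par (par eta)"
  unfolding sub_leaves_def using par_anc anc_trans by blast

lemma sub_leaves_nonempty:
  assumes "eta \<in> N"
  shows "sub_leaves N r par eta \<noteq> {}"
proof -
  let ?S = "{x \<in> N. anc par eta x}"
  have "finite ?S" using finite_nodes by simp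
  moreover have "eta \<in> ?S" using assms anc_refl by simp
  ultimately obtain x where x: "x \<in> ?S"
    and deepest: "\<And>y. y \<in> ?S \<Longrightarrow> card (ancestors y) \<le> card (ancestors x)"
    using obtain_deepest by blast
  have "\<not> (\<exists>y\<in>N. y \<noteq> r \<and> par y = x)"
  proof
    assume "\<exists>y\<in>N. y \<noteq> r \<and> par y = x"
    then obtain y where y: "y \<in> N" "y \<noteq> r" "par y = x" by blast
    then have "card (ancestors x) < card (ancestors y)"
      using card_ancestors_strict_mono par_anc par_neq_self by blast
    moreover have "y \<in> ?S" using x y par_anc anc_trans by blast
    ultimately show False using deepest by fastforce
  qed
  then show ?thesis using x unfolding sub_leaves_def leaves_def by blast
qed

subsection \<open>Lowest common ancestors\<close>

definition is_lca :: "'n \<Rightarrow> 'n \<Rightarrow> 'n \<Rightarrow> bool" where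
  "is_lca x y e \<longleftrightarrow> e \<in> N \<and> anc par e x \<and> anc par e y \<and>
     (\<forall>e'\<in>N. anc par e' x \<and> anc par e' y \<longrightarrow> anc par e' e)"

lemma ex1_lca:
  assumes "x \<in> N" "y \<in> N"
  shows "\<exists>!e. is_lca x y e"
proof -
  let ?C = "{e \<in> N. anc par e x \<and> anc par e y}"
  have "finite ?C" using finite_nodes by simp
  moreover have "r \<in> ?C" using root_anc assms root_in_nodes by blast
  ultimately obtain e where e: "e \<in> ?C"
    and deepest: "\<And>e'. e' \<in> ?C \<Longrightarrow> card (ancestors e') \<le> card (ancestors e)"
    using obtain_deepest by blast
  have "anc par e' e" if e': "e' \<in> ?C" for e'
  proof -
    have "anc par e' e \<or> anc par e e'" using anc_linear e e' by blast
    moreover have "\<not> (anc par e e' \<and> e \<noteq> e')"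
      using card_ancestors_strict_mono deepest[OF e'] e' by fastforce
    ultimately show ?thesis using anc_refl by blast
  qed
  then have "is_lca x y e" using e unfolding is_lca_def by blast
  moreover have "e1 = e2" if "is_lca x y e1" "is_lca x y e2" for e1 e2
    using that unfolding is_lca_def using anc_antisym by blast
  ultimately show ?thesis by blast
qed

lemma is_lca_lca:
  assumes "x \<in> N" "y \<in> N"
  shows "is_lca x y (lca N par x y)"
  unfolding lca_def using theI'[OF ex1_lca[OF assms, unfolded is_lca_def]]
  by (simp add: is_lca_def)

lemma lca_unique:
  assumes "x \<in> N" "y \<in> N" "is_lca x y e"
  shows "lca N par x y = e"
  using ex1_lca[OF assms(1,2)] assms(3) is_lca_lca[OF assms(1,2)] by blast

lemma
  assumes "x \<in> N" "y \<in> N"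
  shows lca_in_nodes: "lca N par x y \<in> N"
    and lca_anc_left: "anc par (lca N par x y) x"
    and lca_anc_right: "anc par (lca N par x y) y"
    and anc_lca: "\<lbrakk>e \<in> N; anc par e x; anc par e y\<rbrakk> \<Longrightarrow> anc par e (lca N par x y)"
  using is_lca_lca[OF assms] unfolding is_lca_def by blast+

subsection \<open>Admissible labellings\<close>

lemma admissible_anc_mono:
  fixes f :: "'n \<Rightarrow> 'a::{linorder,zero}"
  assumes "admissible N r par f" "anc par a b" "b \<in> N"
  shows "f b \<le> f a"
proof -
  obtain k where k: "(par ^^ k) b = a" using assms(2) unfolding anc_def by blast
  have "f b \<le> f ((par ^^ k) b)"
  proof (induction k)
    case (Suc k)
    let ?u = "(par ^^ k) b"
    have "?u \<in> N" using funpow_par_in_nodes assms(3) by blast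
    then have "f ?u \<le> f (par ?u)"
      using assms(1) par_root unfolding admissible_def by (cases "?u = r") auto
    then show ?case using Suc by simp
  qed simp
  then show ?thesis using k by simp
qed

lemma admissible_lca_relaxed_ultrametric:
  fixes f :: "'n \<Rightarrow> ereal"
  assumes adm: "admissible N r par f"
  shows "relaxed_ultrametric (leaves N r par) (\<lambda>x y. f (lca N par x y))"
  unfolding relaxed_ultrametric_def
proof (intro conjI ballI)
  have leaf_node: "x \<in> leaves N r par \<Longrightarrow> x \<in> N" for x unfolding leaves_def by blast
  fix x y assume "x \<in> leaves N r par" "y \<in> leaves N r par"
  then show "0 \<le> f (lca N par x y)"
    using adm lca_in_nodes leaf_node unfolding admissible_def by blast
  show "f (lca N par x y) = f (lca N par y x)"
    unfolding lca_def by (simp add: conj_commute conj_left_commute)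
next
  have leaf_node: "x \<in> leaves N r par \<Longrightarrow> x \<in> N" for x unfolding leaves_def by blast
  fix x y w assume "x \<in> leaves N r par" "y \<in> leaves N r par" "w \<in> leaves N r par"
  then have nodes: "x \<in> N" "y \<in> N" "w \<in> N" using leaf_node by blast+
  let ?xy = "lca N par x y" and ?yw = "lca N par y w" and ?xw = "lca N par x w"
  have below: "f ?xw \<le> f e" if "e \<in> N" "anc par e x" "anc par e w" for e
    using admissible_anc_mono[OF adm] anc_lca[OF nodes(1,3) that] lca_in_nodes[OF nodes(1,3)]
    by blast
  have "anc par ?xy ?yw \<or> anc par ?yw ?xy"
    using anc_linear[OF lca_anc_right[OF nodes(1,2)] lca_anc_left[OF nodes(2,3)]] .
  then have "f ?xw \<le> f ?xy \<or> f ?xw \<le> f ?yw"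
  proof
    assume "anc par ?xy ?yw"
    then have "anc par ?xy w" using anc_trans lca_anc_right[OF nodes(2,3)] by blast
    then show ?thesis using below lca_in_nodes lca_anc_left nodes by blast
  next
    assume "anc par ?yw ?xy"
    then have "anc par ?yw x" using anc_trans lca_anc_left[OF nodes(1,2)] by blast
    then show ?thesis using below lca_in_nodes lca_anc_right nodes by blast
  qed
  then show "f ?xw \<le> max (f ?xy) (f ?yw)" by (auto simp: le_max_iff_disj)
qed

subsection \<open>Center costs\<close>

lemma cost1_le_card_mult:
  assumes adm: "admissible N r par d" and "eta \<in> N" "c \<in> sub_leaves N r par eta"
  shows "cost1 N r par d z eta c \<le> real (card (sub_leaves N r par eta)) * d eta ^ z"
  unfolding cost1_def
proof (rule sum_bounded_above)
  fix l assume l: "l \<in> sub_leaves N r par eta"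
  have nodes: "l \<in> N" "c \<in> N" using l assms(3) sub_leaves_in_nodes by blast+
  have "anc par eta (lca N par l c)"
    using anc_lca nodes assms(2,3) l anc_sub_leaves by blast
  then have "d (lca N par l c) \<le> d eta"
    using admissible_anc_mono[OF adm] lca_in_nodes nodes by blast
  moreover have "0 \<le> d (lca N par l c)"
    using adm lca_in_nodes nodes unfolding admissible_def by blast
  ultimately show "d (lca N par l c) ^ z \<le> d eta ^ z" by (rule power_mono)
qed

lemma center_cost_le_cost1:
  "c \<in> sub_leaves N r par eta \<Longrightarrow> center_cost N r par d z eta \<le> cost1 N r par d z eta c"
  unfolding center_cost_def using finite_sub_leaves by simp

lemma center_cost_attained:
  assumes "eta \<in> N"
  obtains c where "c \<in> sub_leaves N r par eta"
    "center_cost N r par d z eta = cost1 N r par d z eta c"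
proof -
  have "center_cost N r par d z eta \<in> cost1 N r par d z eta ` sub_leaves N r par eta"
    unfolding center_cost_def
    using finite_sub_leaves sub_leaves_nonempty[OF assms] by (intro Min_in) auto
  then show ?thesis using that by auto
qed

lemma lca_outside_subtree:
  assumes "eta \<in> N" "c \<in> sub_leaves N r par eta"
    and l: "l \<in> sub_leaves N r par (par eta) - sub_leaves N r par eta"
  shows "lca N par l c = par eta"
proof (rule lca_unique)
  show nodes: "l \<in> N" "c \<in> N" using l assms(2) sub_leaves_in_nodes by blast+
  have not_below: "\<not> anc par eta l" using l unfolding sub_leaves_def by blast
  show "is_lca l c (par eta)" unfolding is_lca_def
  proof (intro conjI ballI impI)
    show "par eta \<in> N" using par_in_nodes assms(1) .
    show "anc par (par eta) l" using l anc_sub_leaves by blast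
    show "anc par (par eta) c"
      using assms(2) sub_leaves_par_subset anc_sub_leaves by blast
    fix e assume e: "e \<in> N" "anc par e l \<and> anc par e c"
    then have "anc par eta e \<or> anc par e eta"
      using anc_linear anc_sub_leaves assms(2) by blast
    then show "anc par e (par eta)"
      using e not_below anc_trans anc_cases_par by blast
  qed
qed

lemma cost1_par_eq:
  assumes "eta \<in> N" "c \<in> sub_leaves N r par eta"
  shows "cost1 N r par d z (par eta) c = cost1 N r par d z eta c
    + real (card (sub_leaves N r par (par eta) - sub_leaves N r par eta)) * d (par eta) ^ z"
proof -
  let ?Se = "sub_leaves N r par eta" and ?Sp = "sub_leaves N r par (par eta)"
  let ?g = "\<lambda>l. d (lca N par l c) ^ z"
  have "cost1 N r par d z (par eta) c = sum ?g ?Se + sum ?g (?Sp - ?Se)"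
    unfolding cost1_def using sum.subset_diff[OF sub_leaves_par_subset finite_sub_leaves]
    by (simp add: add.commute)
  also have "sum ?g (?Sp - ?Se) = real (card (?Sp - ?Se)) * d (par eta) ^ z"
    using lca_outside_subtree[OF assms] by simp
  finally show ?thesis unfolding cost1_def .
qed

subsection \<open>Cost decrease\<close>

lemma cost_decrease_nonneg:
  assumes adm: "admissible N r par d" and eta: "eta \<in> N"
  shows "0 \<le> cost_decrease N r par d eta z"
proof (cases "eta = r")
  case True then show ?thesis unfolding cost_decrease_def by simp
next
  case False
  let ?n = "real (card (sub_leaves N r par eta))"
  obtain c where c: "c \<in> sub_leaves N r par eta" using sub_leaves_nonempty eta by blast
  have "d eta ^ z \<le> d (par eta) ^ z"
    using adm eta False unfolding admissible_def by (blast intro: power_mono)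
  then have "?n * d eta ^ z \<le> ?n * d (par eta) ^ z" by (simp add: mult_left_mono)
  moreover have "center_cost N r par d z eta \<le> ?n * d eta ^ z"
    using center_cost_le_cost1[OF c, of d z] cost1_le_card_mult[OF adm eta c, of z] by linarith
  ultimately show ?thesis using False unfolding cost_decrease_def by simp
qed

lemma cost_decrease_le_par:
  assumes adm: "admissible N r par d" and eta: "eta \<in> N" "eta \<noteq> r"
  shows "cost_decrease N r par d eta z \<le> cost_decrease N r par d (par eta) z"
proof (cases "par eta = r")
  case True then show ?thesis unfolding cost_decrease_def by simp
next
  case False
  let ?p = "par eta"
  let ?Se = "sub_leaves N r par eta" and ?Sp = "sub_leaves N r par ?p"
  have p: "?p \<in> N" using par_in_nodes eta(1) .
  obtain c where c: "c \<in> ?Se" and center: "center_cost N r par d z eta = cost1 N r par d z eta c"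
    using center_cost_attained[OF eta(1)] by blast
  have "center_cost N r par d z ?p \<le> cost1 N r par d z ?p c"
    using center_cost_le_cost1 c sub_leaves_par_subset by blast
  also have "\<dots> = cost1 N r par d z eta c + real (card (?Sp - ?Se)) * d ?p ^ z"
    using cost1_par_eq[OF eta(1) c] .
  finally have cost_p: "center_cost N r par d z ?p
      \<le> cost1 N r par d z eta c + real (card (?Sp - ?Se)) * d ?p ^ z" .
  have "card ?Sp = card ?Se + card (?Sp - ?Se)"
    using card_Diff_subset[OF _ sub_leaves_par_subset] card_mono[OF _ sub_leaves_par_subset]
      finite_sub_leaves by fastforce
  moreover have "d ?p ^ z \<le> d (par ?p) ^ z"
    using adm p False unfolding admissible_def by (blast intro: power_mono)
  then have "real (card ?Sp) * d ?p ^ z \<le> real (card ?Sp) * d (par ?p) ^ z"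
    by (simp add: mult_left_mono)
  ultimately have "real (card ?Se) * d ?p ^ z - cost1 N r par d z eta c
      \<le> real (card ?Sp) * d (par ?p) ^ z - center_cost N r par d z ?p"
    using cost_p by (simp add: algebra_simps)
  then show ?thesis using False eta(2) unfolding cost_decrease_def center by simp
qed

end

theorem mainTheorem5:
  fixes N :: "'n set" and r :: 'n and par :: "'n \<Rightarrow> 'n" and d :: "'n \<Rightarrow> real" and z :: nat
  assumes "rooted_tree N r par"
    and "admissible N r par d"
    and "z \<ge> 1"
  shows "(\<forall>eta\<in>N - {r}. 0 \<le> cost_decrease N r par d eta z \<and>
            cost_decrease N r par d eta z \<le> cost_decrease N r par d (par eta) z)
       \<and> admissible N r par (\<lambda>eta. cost_decrease N r par d eta z)
       \<and> relaxed_ultrametric (leaves N r par)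
           (\<lambda>x y. cost_decrease N r par d (lca N par x y) z)"
proof -
  interpret finite_rooted_tree N r par by unfold_locales (rule assms(1))
  have monotone: "\<forall>eta\<in>N - {r}. 0 \<le> cost_decrease N r par d eta z \<and>
      cost_decrease N r par d eta z \<le> cost_decrease N r par d (par eta) z"
    using cost_decrease_nonneg[OF assms(2)] cost_decrease_le_par[OF assms(2)] by blast
  moreover have adm: "admissible N r par (\<lambda>eta. cost_decrease N r par d eta z)"
    unfolding admissible_def using monotone cost_decrease_nonneg[OF assms(2)] by blast
  ultimately show ?thesis using admissible_lca_relaxed_ultrametric[OF adm] by blast
qed

end
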